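(* Generalised pp-waves with purely axial torsion whose Levi-Civita Ricci curvature $\{Ric\}$ is parallel (i.e. $\{\nabla\}\{Ric\}=0$, where $\{\nabla\}$ is the Levi-Civita covariant derivative and $\{Ric\}$ the Ricci tensor of the Levi-Civita connection) are solutions of the system of Euler–Lagrange equations $\partial S/\partial g=0$, $\partial S/\partial \Gamma=0$ in the Yang–Mills case $q(R)=R^\kappa{}_{\lambda\mu\nu}R^\lambda{}_\kappa{}^{\mu\nu}$.
   Context: Setting: quadratic metric-affine gravity. Spacetime is a connected real 4-manifold $M$ with a Lorentzian metric $g$ and an independent affine connection $\Gamma$ (unknowns: the 10 components $g_{\mu\nu}$ and the 64 coefficients $\Gamma^\lambda{}_{\mu\nu}$). The action is $S=\int q(R)$, with $\int f := \int f\sqrt{|\det g|}\,dx^0dx^1dx^2dx^3$, where $R$ is the curvature of $\Gamma$ and $q$ is an $O(1,3)$-invariant quadratic form on curvature; varying $S$ independently in $g$ and $\Gamma$ gives the system $\partial S/\partial g=0$, $\partial S/\partial \Gamma=0$. Torsion is $T^\lambda{}_{\mu\nu}=\Gamma^\lambda{}_{\mu\nu}-\Gamma^\lambda{}_{\nu\mu}$. A pp-metric is one which in local coordinates $(x^0,x^1,x^2,x^3)$ reads $ds^2=2\,dx^0dx^3-(dx^1)^2-(dx^2)^2+f(x^1,x^2,x^3)(dx^3)^2$; it admits a nonvanishing spinor field $\chi$ parallel with respect to the Levi-Civita connection, with $\chi^a=(1,0)$, the parallel real null vector field $l^\alpha=\sigma^\alpha{}_{a\dot b}\chi^a\bar\chi^{\dot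 b}$, $l^\mu=(1,0,0,0)$, and a complex vector field $m^\mu=(0,1,\mp i,0)$ with $m_\alpha m^\alpha=l_\alpha m^\alpha=0$, $m_\alpha\bar m^\alpha=-2$. The phase is $\varphi(x)=\int l\cdot dx$, which equals $x^3+\mathrm{const}$ in these coordinates. Definition: a generalised pp-wave with purely axial torsion is a metric compatible spacetime ($\nabla g=0$) with pp-metric and torsion $T=*A$, where $A=k(\varphi)\,l$ and $k:\mathbb{R}\to\mathbb{R}$ is an arbitrary real function of the phase; equivalently $T=\mp\frac{i}{2}k(x^3)\,l\wedge m\wedge\bar m$, i.e. $T_{\kappa\mu\nu}=k(\varphi)\,l^\lambda\varepsilon_{\lambda\kappa\mu\nu}$. *)

theory Defs
  imports "HOL-Analysis.Analysis"
begin

type_synonym pt = "real^4"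
type_synonym tensor2 = "pt \<Rightarrow> 4 \<Rightarrow> 4 \<Rightarrow> real"            (* g x a b = g_{ab}(x) *)
type_synonym conn = "pt \<Rightarrow> 4 \<Rightarrow> 4 \<Rightarrow> 4 \<Rightarrow> real"       (* G x l m n = Gamma^l_{mn}(x) *)

definition pd :: "(pt \<Rightarrow> real) \<Rightarrow> 4 \<Rightarrow> pt \<Rightarrow> real" where
  "pd F i x = deriv (\<lambda>t. F (x + t *\<^sub>R axis i 1)) 0"

fun pds :: "(pt \<Rightarrow> real) \<Rightarrow> 4 list \<Rightarrow> pt \<Rightarrow> real" where
  "pds F [] = F"
| "pds F (i # is) = pd (pds F is) i"

definition cinf_on :: "pt set \<Rightarrow> (pt \<Rightarrow> real) \<Rightarrow> bool" where
  "cinf_on U F \<longleftrightarrow>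
     (\<forall>is. continuous_on U (pds F is) \<and>
       (\<forall>i. \<forall>x\<in>U. ((\<lambda>t. pds F is (x + t *\<^sub>R axis i 1)) has_real_derivative pds F (i # is) x) (at 0)))"

definition pp_metric :: "(real \<Rightarrow> real \<Rightarrow> real \<Rightarrow> real) \<Rightarrow> tensor2" where
  "pp_metric f x a b =
     (if (a = 0 \<and> b = 3) \<or> (a = 3 \<and> b = 0) then 1
      else if a = b \<and> (a = 1 \<or> a = 2) then -1
      else if a = 3 \<and> b = 3 then f (x$1) (x$2) (x$3)
      else 0)"

definition gmat :: "tensor2 \<Rightarrow> pt \<Rightarrow> real^4^4" where
  "gmat g x = (\<chi> i j. g x i j)"

definition ginv :: "tensor2 \<Rightarrow> tensor2" where
  "ginv g x a b = matrix_inv (gmat g x) $ a $ b"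

definition vol :: "tensor2 \<Rightarrow> pt \<Rightarrow> real" where
  "vol g x = sqrt \<bar>det (gmat g x)\<bar>"

(* Levi-Civita symbol with eps_{0123} = 1 *)
definition eps :: "4 \<Rightarrow> 4 \<Rightarrow> 4 \<Rightarrow> 4 \<Rightarrow> real" where
  "eps a b c d = of_int (sgn (Rep_bit0 b - Rep_bit0 a) * sgn (Rep_bit0 c - Rep_bit0 a) *
       sgn (Rep_bit0 d - Rep_bit0 a) * sgn (Rep_bit0 c - Rep_bit0 b) *
       sgn (Rep_bit0 d - Rep_bit0 b) * sgn (Rep_bit0 d - Rep_bit0 c))"

definition curv :: "conn \<Rightarrow> pt \<Rightarrow> 4 \<Rightarrow> 4 \<Rightarrow> 4 \<Rightarrow> 4 \<Rightarrow> real" where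
  "curv G x k l m n =
     pd (\<lambda>y. G y k n l) m x - pd (\<lambda>y. G y k m l) n x
     + (\<Sum>e\<in>UNIV. G x k m e * G x e n l - G x k n e * G x e m l)"

definition torsion :: "conn \<Rightarrow> pt \<Rightarrow> 4 \<Rightarrow> 4 \<Rightarrow> 4 \<Rightarrow> real" where
  "torsion G x l m n = G x l m n - G x l n m"

definition ym_density :: "tensor2 \<Rightarrow> conn \<Rightarrow> pt \<Rightarrow> real" where
  "ym_density g G x =
     (\<Sum>k\<in>UNIV. \<Sum>l\<in>UNIV. \<Sum>m\<in>UNIV. \<Sum>n\<in>UNIV. \<Sum>a\<in>UNIV. \<Sum>b\<in>UNIV.
        curv G x k l m n * curv G x l k a b * ginv g x m a * ginv g x n b) * vol g x"

definition ym_action :: "pt set \<Rightarrow> tensor2 \<Rightarrow> conn \<Rightarrow> real" where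
  "ym_action K g G = integral K (ym_density g G)"

definition EL_metric :: "pt set \<Rightarrow> tensor2 \<Rightarrow> conn \<Rightarrow> bool" where
  "EL_metric U g G \<longleftrightarrow>
     (\<forall>h K. compact K \<and> K \<subseteq> U \<and>
        (\<forall>a b. cinf_on UNIV (\<lambda>x. h x a b) \<and> (\<forall>x. h x a b = h x b a) \<and>
               (\<forall>x. x \<notin> K \<longrightarrow> h x a b = 0))
      \<longrightarrow> ((\<lambda>\<epsilon>. ym_action K (\<lambda>x a b. g x a b + \<epsilon> * h x a b) G) has_real_derivative 0) (at 0))"

definition EL_conn :: "pt set \<Rightarrow> tensor2 \<Rightarrow> conn \<Rightarrow> bool" where
  "EL_conn U g G \<longleftrightarrow>
     (\<forall>H K. compact K \<and> K \<subseteq> U \<and>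
        (\<forall>l m n. cinf_on UNIV (\<lambda>x. H x l m n) \<and> (\<forall>x. x \<notin> K \<longrightarrow> H x l m n = 0))
      \<longrightarrow> ((\<lambda>\<epsilon>. ym_action K g (\<lambda>x l m n. G x l m n + \<epsilon> * H x l m n)) has_real_derivative 0) (at 0))"

definition metric_compatible :: "pt set \<Rightarrow> tensor2 \<Rightarrow> conn \<Rightarrow> bool" where
  "metric_compatible U g G \<longleftrightarrow>
     (\<forall>x\<in>U. \<forall>m a b. pd (\<lambda>y. g y a b) m x - (\<Sum>c\<in>UNIV. G x c m a * g x c b)
                        - (\<Sum>c\<in>UNIV. G x c m b * g x a c) = 0)"

definition christoffel :: "tensor2 \<Rightarrow> conn" where
  "christoffel g x l m n = (1/2) * (\<Sum>k\<in>UNIV. ginv g x l k *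
       (pd (\<lambda>y. g y k n) m x + pd (\<lambda>y. g y k m) n x - pd (\<lambda>y. g y m n) k x))"

definition lc_ricci :: "tensor2 \<Rightarrow> pt \<Rightarrow> 4 \<Rightarrow> 4 \<Rightarrow> real" where
  "lc_ricci g x l n = (\<Sum>k\<in>UNIV. curv (christoffel g) x k l k n)"

definition parallel_lc_ricci :: "pt set \<Rightarrow> tensor2 \<Rightarrow> bool" where
  "parallel_lc_ricci U g \<longleftrightarrow>
     (\<forall>x\<in>U. \<forall>m a b. pd (\<lambda>y. lc_ricci g y a b) m x
        - (\<Sum>c\<in>UNIV. christoffel g x c m a * lc_ricci g x c b)
        - (\<Sum>c\<in>UNIV. christoffel g x c m b * lc_ricci g x a c) = 0)"

(* purely axial torsion T = *A, A = k(phi) l, phi = x^3, l^mu = (1,0,0,0):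
   T_{kmn} = g_{kl} T^l_{mn} = k(phi) l^l eps_{lkmn}, eps_{lkmn} = sqrt|det g| [lkmn] *)
definition axial_torsion :: "pt set \<Rightarrow> tensor2 \<Rightarrow> conn \<Rightarrow> (real \<Rightarrow> real) \<Rightarrow> bool" where
  "axial_torsion U g G k \<longleftrightarrow>
     (\<forall>x\<in>U. \<forall>c m n. (\<Sum>l\<in>UNIV. g x c l * torsion G x l m n)
        = k (x$3) * (\<Sum>l\<in>UNIV. (if l = 0 then 1 else 0) * vol g x * eps l c m n))"

definition gen_ppwave_axial ::
  "pt set \<Rightarrow> (real \<Rightarrow> real \<Rightarrow> real \<Rightarrow> real) \<Rightarrow> (real \<Rightarrow> real) \<Rightarrow> conn \<Rightarrow> bool" where
  "gen_ppwave_axial U f k G \<longleftrightarrow>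
     open U \<and>
     cinf_on U (\<lambda>x. f (x$1) (x$2) (x$3)) \<and> cinf_on U (\<lambda>x. k (x$3)) \<and>
     (\<forall>l m n. cinf_on U (\<lambda>x. G x l m n)) \<and>
     metric_compatible U (pp_metric f) G \<and>
     axial_torsion U (pp_metric f) G k"

end

theory Submission
  imports Defs
begin

text \<open>Metric compatibility and the axial torsion determine the connection: it is the
  Levi-Civita connection of the pp-metric plus the contorsion of \<open>T = k(\<phi>) *l\<close>. Its
  curvature has only the components \<open>R\<^sup>0\<^sub>1 = R\<^sup>1\<^sub>3\<close> and \<open>R\<^sup>0\<^sub>2 = R\<^sup>2\<^sub>3\<close>, so every
  contraction \<open>R\<^sup>\<kappa>\<^sub>\<lambda> R\<^sup>\<lambda>\<^sub>\<kappa>\<close> vanishes: the Yang--Mills Lagrangian is zero for every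
  metric, which gives \<open>\<partial>S/\<partial>g = 0\<close>. Varying \<open>\<Gamma>\<close> by \<open>\<epsilon>H\<close> makes the action a quartic
  polynomial in \<open>\<epsilon>\<close> without constant term, whose linear coefficient integrates
  \<open>R \<cdot> \<delta>R\<close>. Since \<open>{\<nabla>}{Ric} = 0\<close> means that \<open>\<Delta>f = f\<^sub>1\<^sub>1 + f\<^sub>2\<^sub>2\<close> is constant, this
  integrand is the divergence of a current supported in the support of \<open>H\<close>, and its
  integral vanishes. Everything is local.\<close>

lemma UNIV_4_eq: "(UNIV::4 set) = {0,1,2,3}"
  using UNIV_4 by auto

lemma sum_UNIV_4: "sum F (UNIV::4 set) = F 0 + F 1 + F 2 + F 3"
  unfolding UNIV_4_eq by (simp add: ac_simps)

lemma all_4: "(\<forall>i::4. P i) \<longleftrightarrow> P 0 \<and> P 1 \<and> P 2 \<and> P 3"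
  by (metis UNIV_4_eq UNIV_I insertE singletonD)

lemma Rep_bit0_4:
  "Rep_bit0 (0::4) = 0" "Rep_bit0 (1::4) = 1" "Rep_bit0 (2::4) = 2" "Rep_bit0 (3::4) = 3"
  by (simp_all add: bit0.Rep_numeral bit0.Rep_0 bit0.Rep_1)

definition has_partial :: "(pt \<Rightarrow> real) \<Rightarrow> 4 \<Rightarrow> pt \<Rightarrow> real \<Rightarrow> bool" where
  "has_partial F i x D \<longleftrightarrow> ((\<lambda>t. F (x + t *\<^sub>R axis i 1)) has_real_derivative D) (at 0)"

definition partial_differentiable :: "(pt \<Rightarrow> real) \<Rightarrow> 4 \<Rightarrow> pt \<Rightarrow> bool" where
  "partial_differentiable F i x \<longleftrightarrow> (\<exists>D. has_partial F i x D)"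

lemma pd_eqI: "has_partial F i x D \<Longrightarrow> pd F i x = D"
  unfolding has_partial_def pd_def by (rule DERIV_imp_deriv)

lemma has_partial_pd: "partial_differentiable F i x \<Longrightarrow> has_partial F i x (pd F i x)"
  unfolding partial_differentiable_def using pd_eqI by metis

lemma has_partial_add:
  "has_partial A i x a \<Longrightarrow> has_partial B i x b \<Longrightarrow> has_partial (\<lambda>y. A y + B y) i x (a + b)"
  unfolding has_partial_def by (rule DERIV_add)

lemma has_partial_diff:
  "has_partial A i x a \<Longrightarrow> has_partial B i x b \<Longrightarrow> has_partial (\<lambda>y. A y - B y) i x (a - b)"
  unfolding has_partial_def by (rule DERIV_diff)

lemma has_partial_mult:
  "has_partial A i x a \<Longrightarrow> has_partial B i x b \<Longrightarrow>
    has_partial (\<lambda>y. A y * B y) i x (a * B x + A x * b)"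
  unfolding has_partial_def by (drule (1) DERIV_mult) (simp add: mult.commute)

lemma has_partial_const: "has_partial (\<lambda>y. c) i x 0"
  unfolding has_partial_def by simp

lemma has_partial_minus: "has_partial A i x a \<Longrightarrow> has_partial (\<lambda>y. - A y) i x (- a)"
  unfolding has_partial_def by (rule DERIV_minus)

lemma has_partial_shift:
  assumes "has_partial F i (y + s *\<^sub>R axis i 1) D"
  shows "((\<lambda>s. F (y + s *\<^sub>R axis i 1)) has_real_derivative D) (at s)"
proof -
  have "((\<lambda>t. F (y + (t + s) *\<^sub>R axis i 1)) has_real_derivative D) (at 0)"
    using assms unfolding has_partial_def
    by (simp add: scaleR_add_left add.assoc add.commute add.left_commute)
  then show ?thesis using DERIV_shift[of "\<lambda>s. F (y + s *\<^sub>R axis i 1)" _ 0 s] by simp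
qed

lemma partial_differentiable_add [simp]:
  "partial_differentiable A i x \<Longrightarrow> partial_differentiable B i x \<Longrightarrow>
    partial_differentiable (\<lambda>y. A y + B y) i x"
  unfolding partial_differentiable_def using has_partial_add by blast

lemma partial_differentiable_diff [simp]:
  "partial_differentiable A i x \<Longrightarrow> partial_differentiable B i x \<Longrightarrow>
    partial_differentiable (\<lambda>y. A y - B y) i x"
  unfolding partial_differentiable_def using has_partial_diff by blast

lemma partial_differentiable_mult [simp]:
  "partial_differentiable A i x \<Longrightarrow> partial_differentiable B i x \<Longrightarrow>
    partial_differentiable (\<lambda>y. A y * B y) i x"
  unfolding partial_differentiable_def using has_partial_mult by blast

lemma partial_differentiable_const [simp]: "partial_differentiable (\<lambda>y. c) i x"
  unfolding partial_differentiable_def using has_partial_const by blast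

lemma partial_differentiable_minus [simp]:
  "partial_differentiable A i x \<Longrightarrow> partial_differentiable (\<lambda>y. - A y) i x"
  unfolding partial_differentiable_def using has_partial_minus by blast

lemma partial_differentiable_cmult [simp]:
  "partial_differentiable A i x \<Longrightarrow> partial_differentiable (\<lambda>y. c * A y) i x"
  using partial_differentiable_mult[OF partial_differentiable_const] by blast

lemma partial_differentiable_multc [simp]:
  "partial_differentiable A i x \<Longrightarrow> partial_differentiable (\<lambda>y. A y * c) i x"
  using partial_differentiable_mult[OF _ partial_differentiable_const] by blast

lemma partial_differentiable_divc [simp]:
  "partial_differentiable A i x \<Longrightarrow> partial_differentiable (\<lambda>y. A y / c) i x"
  using partial_differentiable_multc[of A i x "1/c"] by simp

lemma pd_add [simp]:
  "partial_differentiable A i x \<Longrightarrow> partial_differentiable B i x \<Longrightarrow>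
    pd (\<lambda>y. A y + B y) i x = pd A i x + pd B i x"
  by (intro pd_eqI has_partial_add has_partial_pd)

lemma pd_diff [simp]:
  "partial_differentiable A i x \<Longrightarrow> partial_differentiable B i x \<Longrightarrow>
    pd (\<lambda>y. A y - B y) i x = pd A i x - pd B i x"
  by (intro pd_eqI has_partial_diff has_partial_pd)

lemma pd_mult [simp]:
  "partial_differentiable A i x \<Longrightarrow> partial_differentiable B i x \<Longrightarrow>
    pd (\<lambda>y. A y * B y) i x = pd A i x * B x + A x * pd B i x"
  by (intro pd_eqI has_partial_mult has_partial_pd)

lemma pd_const [simp]: "pd (\<lambda>y. c) i x = 0"
  by (intro pd_eqI has_partial_const)

lemma pd_minus [simp]: "partial_differentiable A i x \<Longrightarrow> pd (\<lambda>y. - A y) i x = - pd A i x"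
  by (intro pd_eqI has_partial_minus has_partial_pd)

lemma pd_cmult [simp]: "partial_differentiable A i x \<Longrightarrow> pd (\<lambda>y. c * A y) i x = c * pd A i x"
  using pd_mult[OF partial_differentiable_const, of A i x c] by simp

lemma pd_multc [simp]: "partial_differentiable A i x \<Longrightarrow> pd (\<lambda>y. A y * c) i x = pd A i x * c"
  using pd_mult[OF _ partial_differentiable_const, of A i x c] by simp

lemma pd_divc [simp]: "partial_differentiable A i x \<Longrightarrow> pd (\<lambda>y. A y / c) i x = pd A i x / c"
  using pd_multc[of A i x "1/c"] by simp

lemma pds_pd: "pds (pd F i) is = pds F (is @ [i])"
  by (induct "is") auto

lemma cinf_on_pd [simp]: "cinf_on U F \<Longrightarrow> cinf_on U (pd F i)"
  unfolding cinf_on_def pds_pd by (metis append_Cons)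

lemma cinf_on_imp_partial_differentiable:
  "cinf_on U F \<Longrightarrow> x \<in> U \<Longrightarrow> partial_differentiable F i x"
  unfolding cinf_on_def partial_differentiable_def has_partial_def by (metis pds.simps(1))

lemma cinf_on_imp_continuous_on: "cinf_on U F \<Longrightarrow> continuous_on U F"
  unfolding cinf_on_def by (metis pds.simps(1))

lemma cinf_on_const [simp]: "cinf_on U (\<lambda>y. c)"
proof -
  have "pds (\<lambda>y. c) (i # is) = (\<lambda>y. 0)" for i "is"
  proof (induct "is" arbitrary: i)
    case Nil
    show ?case by (simp add: fun_eq_iff)
  next
    case (Cons a "is")
    have "pds (\<lambda>y. c) (i # a # is) = pd (pds (\<lambda>y. c) (a # is)) i" by (rule pds.simps(2))
    then show ?case by (simp only: Cons pd_const)
  qed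
  then have "pds (\<lambda>y. c) is = (\<lambda>y. if is = [] then c else 0)" for "is"
    by (cases "is") simp_all
  then show ?thesis
    unfolding cinf_on_def by (auto simp: has_partial_def[symmetric] has_partial_const)
qed

lemma cinf_on_line_deriv:
  assumes "cinf_on U F" "y + s *\<^sub>R axis i 1 \<in> U"
  shows "((\<lambda>s. F (y + s *\<^sub>R axis i 1)) has_real_derivative pd F i (y + s *\<^sub>R axis i 1)) (at s)"
  using assms by (intro has_partial_shift has_partial_pd cinf_on_imp_partial_differentiable)

lemma eventually_line_in_open:
  fixes U :: "pt set"
  assumes "open U" "x \<in> U"
  shows "eventually (\<lambda>t. x + t *\<^sub>R axis i 1 \<in> U) (nhds (0::real))"
proof -
  obtain r where r: "r > 0" "ball x r \<subseteq> U" using assms open_contains_ball by blast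
  show ?thesis unfolding eventually_nhds_metric
  proof (intro exI[of _ r] conjI allI impI)
    fix t :: real assume "dist t 0 < r"
    then have "dist x (x + t *\<^sub>R axis i 1) < r" by (simp add: dist_norm)
    then show "x + t *\<^sub>R axis i 1 \<in> U" using r by auto
  qed (use r in auto)
qed

lemma pd_cong_open:
  assumes "open U" "x \<in> U" "\<And>y. y \<in> U \<Longrightarrow> F y = F' y"
  shows "pd F i x = pd F' i x"
  unfolding pd_def
  by (rule deriv_cong_ev[OF eventually_mono[OF eventually_line_in_open[OF assms(1,2)]]])
     (use assms in auto)

lemma partial_differentiable_cong_open:
  assumes "open U" "x \<in> U" "\<And>y. y \<in> U \<Longrightarrow> F y = F' y"
  shows "partial_differentiable F i x = partial_differentiable F' i x"
proof -
  have "has_partial F i x D = has_partial F' i x D" for D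
    unfolding has_partial_def
    by (rule DERIV_cong_ev[OF refl eventually_mono[OF eventually_line_in_open[OF assms(1,2)]] refl])
       (use assms in auto)
  then show ?thesis unfolding partial_differentiable_def by blast
qed

definition translation_invariant :: "(pt \<Rightarrow> real) \<Rightarrow> 4 \<Rightarrow> bool" where
  "translation_invariant F j \<longleftrightarrow> (\<forall>y t. F (y + t *\<^sub>R axis j 1) = F y)"

lemma pd_translation_invariant [simp]: "translation_invariant F j \<Longrightarrow> pd F j y = 0"
  unfolding translation_invariant_def pd_def by simp

lemma translation_invariant_pd [simp]:
  assumes "translation_invariant F j"
  shows "translation_invariant (pd F i) j"
  unfolding translation_invariant_def pd_def
proof (intro allI)
  fix y t
  have "F (y + t *\<^sub>R axis j 1 + s *\<^sub>R axis i 1) = F (y + s *\<^sub>R axis i 1)" for s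
    using assms unfolding translation_invariant_def by (metis add.commute add.left_commute)
  then show "deriv (\<lambda>s. F (y + t *\<^sub>R axis j 1 + s *\<^sub>R axis i 1)) 0 = deriv (\<lambda>s. F (y + s *\<^sub>R axis i 1)) 0"
    by simp
qed

lemma translation_invariant_const [simp]: "translation_invariant (\<lambda>y. c) j"
  by (simp add: translation_invariant_def)

lemma mixed_difference_mvt:
  fixes F :: "pt \<Rightarrow> real"
  assumes F: "cinf_on U F" and r: "ball x r \<subseteq> U" and h: "0 < h" "2 * h < r"
  shows "\<exists>p. dist p x < 2 * h \<and>
     F (x + h *\<^sub>R axis i 1 + h *\<^sub>R axis j 1) - F (x + h *\<^sub>R axis i 1) - F (x + h *\<^sub>R axis j 1) + F x
       = h * h * pd (pd F i) j p"
proof -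
  let ?e = "axis i 1 :: pt" and ?u = "axis j 1 :: pt"
  have near: "dist (x + s *\<^sub>R ?e + t *\<^sub>R ?u) x \<le> s + t" if "0 \<le> s" "0 \<le> t" for s t
  proof -
    have "norm (s *\<^sub>R ?e + t *\<^sub>R ?u) \<le> norm (s *\<^sub>R ?e) + norm (t *\<^sub>R ?u)"
      by (rule norm_triangle_ineq)
    then show ?thesis using that by (simp add: dist_norm add.assoc)
  qed
  have inU: "x + s *\<^sub>R ?e + t *\<^sub>R ?u \<in> U" if "0 \<le> s" "s \<le> h" "0 \<le> t" "t \<le> h" for s t
    using near[of s t] that h r by (auto simp: dist_commute)
  define \<phi> where "\<phi> s = F (x + h *\<^sub>R ?u + s *\<^sub>R ?e) - F (x + s *\<^sub>R ?e)" for s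
  have d\<phi>: "(\<phi> has_real_derivative (pd F i (x + h *\<^sub>R ?u + s *\<^sub>R ?e) - pd F i (x + s *\<^sub>R ?e))) (at s)"
    if "0 \<le> s" "s \<le> h" for s
    unfolding \<phi>_def
  proof (intro DERIV_diff cinf_on_line_deriv[OF F])
    show "x + h *\<^sub>R ?u + s *\<^sub>R ?e \<in> U"
      using inU[of s h] that h by (simp add: add.assoc add.commute add.left_commute)
    show "x + s *\<^sub>R ?e \<in> U" using inU[of s 0] that h by simp
  qed
  obtain s1 where s1: "0 < s1" "s1 < h"
    "\<phi> h - \<phi> 0 = h * (pd F i (x + h *\<^sub>R ?u + s1 *\<^sub>R ?e) - pd F i (x + s1 *\<^sub>R ?e))"
    using MVT2[OF h(1), of \<phi>, OF d\<phi>] by auto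
  define \<psi> where "\<psi> t = pd F i (x + s1 *\<^sub>R ?e + t *\<^sub>R ?u)" for t
  have d\<psi>: "(\<psi> has_real_derivative pd (pd F i) j (x + s1 *\<^sub>R ?e + t *\<^sub>R ?u)) (at t)"
    if "0 \<le> t" "t \<le> h" for t
    unfolding \<psi>_def by (rule cinf_on_line_deriv[OF cinf_on_pd[OF F]]) (use inU[OF _ _ that] s1 in auto)
  obtain t1 where t1: "0 < t1" "t1 < h"
    "\<psi> h - \<psi> 0 = h * pd (pd F i) j (x + s1 *\<^sub>R ?e + t1 *\<^sub>R ?u)"
    using MVT2[OF h(1), of \<psi>, OF d\<psi>] by auto
  have "dist (x + s1 *\<^sub>R ?e + t1 *\<^sub>R ?u) x < 2 * h"
    using near[of s1 t1] s1 t1 by simp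
  moreover have "F (x + h *\<^sub>R ?e + h *\<^sub>R ?u) - F (x + h *\<^sub>R ?e) - F (x + h *\<^sub>R ?u) + F x = \<phi> h - \<phi> 0"
    unfolding \<phi>_def by (simp add: algebra_simps)
  moreover have "\<phi> h - \<phi> 0 = h * (\<psi> h - \<psi> 0)"
    using s1(3) unfolding \<psi>_def by (simp add: algebra_simps)
  ultimately show ?thesis using t1(3) by (intro exI[of _ "x + s1 *\<^sub>R ?e + t1 *\<^sub>R ?u"]) simp
qed

text \<open>Both mixed partials are limits of the same second difference quotient.\<close>

lemma pd_pd_commute:
  fixes F :: "pt \<Rightarrow> real"
  assumes "open U" "cinf_on U F" "x \<in> U"
  shows "pd (pd F i) j x = pd (pd F j) i x"
proof (rule ccontr)
  assume ne: "pd (pd F i) j x \<noteq> pd (pd F j) i x"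
  define \<epsilon> where "\<epsilon> = \<bar>pd (pd F i) j x - pd (pd F j) i x\<bar> / 2"
  have \<epsilon>: "\<epsilon> > 0" using ne by (simp add: \<epsilon>_def)
  obtain r where r: "r > 0" "ball x r \<subseteq> U" using assms open_contains_ball by blast
  have cont: "continuous (at x) (pd (pd F a) b)" for a b
    using cinf_on_imp_continuous_on[OF cinf_on_pd[OF cinf_on_pd[OF assms(2)]]] assms
      continuous_on_eq_continuous_at by blast
  obtain d1 where d1: "d1 > 0" "\<And>y. dist y x < d1 \<Longrightarrow> dist (pd (pd F i) j y) (pd (pd F i) j x) < \<epsilon>"
    using cont \<epsilon> unfolding continuous_at_eps_delta by blast
  obtain d2 where d2: "d2 > 0" "\<And>y. dist y x < d2 \<Longrightarrow> dist (pd (pd F j) i y) (pd (pd F j) i x) < \<epsilon>"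
    using cont \<epsilon> unfolding continuous_at_eps_delta by blast
  define h where "h = min r (min d1 d2) / 4"
  have h: "0 < h" "2 * h < r" "2 * h < d1" "2 * h < d2" using r d1 d2 by (auto simp: h_def)
  obtain p1 where p1: "dist p1 x < 2 * h"
     "F (x + h *\<^sub>R axis i 1 + h *\<^sub>R axis j 1) - F (x + h *\<^sub>R axis i 1) - F (x + h *\<^sub>R axis j 1) + F x
       = h * h * pd (pd F i) j p1"
    using mixed_difference_mvt[OF assms(2) r(2) h(1,2)] by blast
  obtain p2 where p2: "dist p2 x < 2 * h"
     "F (x + h *\<^sub>R axis j 1 + h *\<^sub>R axis i 1) - F (x + h *\<^sub>R axis j 1) - F (x + h *\<^sub>R axis i 1) + F x
       = h * h * pd (pd F j) i p2"
    using mixed_difference_mvt[OF assms(2) r(2) h(1,2)] by blast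
  have "h * h * pd (pd F i) j p1 = h * h * pd (pd F j) i p2"
    using p1(2) p2(2) by (simp add: algebra_simps)
  then have eq: "pd (pd F i) j p1 = pd (pd F j) i p2" using h(1) by simp
  have "dist (pd (pd F i) j p1) (pd (pd F i) j x) < \<epsilon>" using d1 p1 h by auto
  moreover have "dist (pd (pd F j) i p2) (pd (pd F j) i x) < \<epsilon>" using d2 p2 h by auto
  ultimately have "\<bar>pd (pd F i) j x - pd (pd F j) i x\<bar> < 2 * \<epsilon>"
    using eq by (simp add: dist_real_def)
  then show False by (simp add: \<epsilon>_def)
qed

section \<open>The pp-metric\<close>

definition pp_fun :: "(real \<Rightarrow> real \<Rightarrow> real \<Rightarrow> real) \<Rightarrow> pt \<Rightarrow> real" where
  "pp_fun f x = f (x$1) (x$2) (x$3)"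

definition phase_fun :: "(real \<Rightarrow> real) \<Rightarrow> pt \<Rightarrow> real" where
  "phase_fun k x = k (x$3)"

lemma translation_invariant_pp_fun [simp]: "translation_invariant (pp_fun f) 0"
  unfolding translation_invariant_def pp_fun_def by (simp add: axis_def)

lemma translation_invariant_phase_fun [simp]:
  "translation_invariant (phase_fun k) 0" "translation_invariant (phase_fun k) 1"
  "translation_invariant (phase_fun k) 2"
  unfolding translation_invariant_def phase_fun_def by (simp_all add: axis_def)

definition pp_inv_metric :: "(real \<Rightarrow> real \<Rightarrow> real \<Rightarrow> real) \<Rightarrow> pt \<Rightarrow> 4 \<Rightarrow> 4 \<Rightarrow> real" where
  "pp_inv_metric f x a b =
     (if (a = 0 \<and> b = 3) \<or> (a = 3 \<and> b = 0) then 1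
      else if a = b \<and> (a = 1 \<or> a = 2) then -1
      else if a = 0 \<and> b = 0 then - f (x$1) (x$2) (x$3)
      else 0)"

lemma matrix_inv_eqI:
  fixes A B :: "'a::comm_ring_1^'n^'n"
  assumes "A ** B = mat 1" "B ** A = mat 1"
  shows "matrix_inv A = B"
proof -
  have "\<exists>A'. A ** A' = mat 1 \<and> A' ** A = mat 1" using assms by blast
  then have C: "A ** matrix_inv A = mat 1 \<and> matrix_inv A ** A = mat 1"
    unfolding matrix_inv_def by (rule someI_ex)
  have "matrix_inv A = matrix_inv A ** (A ** B)" using assms by simp
  also have "\<dots> = B" using C by (simp add: matrix_mul_assoc)
  finally show ?thesis .
qed

lemma ginv_pp_metric: "ginv (pp_metric f) x a b = pp_inv_metric f x a b"
proof -
  let ?B = "(\<chi> i j. pp_inv_metric f x i j) :: real^4^4"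
  have "gmat (pp_metric f) x ** ?B = mat 1" "?B ** gmat (pp_metric f) x = mat 1"
    unfolding vec_eq_iff matrix_matrix_mult_def gmat_def mat_def
    by (simp_all add: all_4 sum_UNIV_4 pp_metric_def pp_inv_metric_def)
  then have "matrix_inv (gmat (pp_metric f) x) = ?B" by (rule matrix_inv_eqI)
  then show ?thesis unfolding ginv_def by simp
qed

text \<open>Swapping rows 0 and 3 makes the metric matrix upper triangular with unit diagonal.\<close>

lemma det_gmat_pp_metric: "det (gmat (pp_metric f) x) = -1"
proof -
  let ?M = "gmat (pp_metric f) x"
  define p where "p = Transposition.transpose (0::4) 3"
  have p: "p permutes UNIV" unfolding p_def by (rule permutes_swap_id) auto
  define N where "N = (\<chi> i j. pp_metric f x (p i) j :: real^4^4)"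
  have N: "(\<chi> i. ?M $ p i) = N" unfolding N_def gmat_def by (simp add: vec_eq_iff)
  have "\<forall>i j::4. j < i \<longrightarrow> N $ i $ j = 0"
    unfolding N_def p_def all_4
    by (simp add: less_bit0_def Rep_bit0_4 pp_metric_def Transposition.transpose_def)
  then have "det N = prod (\<lambda>i. N $ i $ i) UNIV"
    by (intro det_upperdiagonal) blast
  also have "\<dots> = 1"
    unfolding UNIV_4_eq N_def p_def by (simp add: pp_metric_def Transposition.transpose_def)
  finally have "det N = 1" .
  moreover have "sign p = -1" unfolding p_def by (simp add: sign_swap_id)
  ultimately show ?thesis using det_permute_rows[OF p, of ?M] N by simp
qed

lemma vol_pp_metric: "vol (pp_metric f) x = 1"
  unfolding vol_def det_gmat_pp_metric by simp

lemma pd_pp_metric: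
  "pd (\<lambda>y. pp_metric f y a b) m x = (if a = 3 \<and> b = 3 then pd (pp_fun f) m x else 0)"
proof (cases "a = 3 \<and> b = 3")
  case True
  then have "(\<lambda>y. pp_metric f y a b) = pp_fun f" by (intro ext) (simp add: pp_metric_def pp_fun_def)
  then show ?thesis using True by simp
next
  case False
  have "(\<lambda>y. pp_metric f y a b) = (\<lambda>y. pp_metric f 0 a b)"
    unfolding pp_metric_def if_not_P[OF False] by (rule refl)
  then show ?thesis by (simp only: if_not_P[OF False] pd_const)
qed

section \<open>The connection of a generalised pp-wave\<close>

text \<open>The Christoffel symbols of the pp-metric plus the contorsion \<open>\<kappa>/2 \<epsilon>\<close> of the axial
  torsion \<open>T = \<kappa> *l\<close>.\<close>

definition pp_conn :: "(real \<Rightarrow> real \<Rightarrow> real \<Rightarrow> real) \<Rightarrow> (pt \<Rightarrow> real) \<Rightarrow> conn" where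
  "pp_conn f \<kappa> y l m n =
    (if l = 0 \<and> m = 1 \<and> n = 2 then \<kappa> y / 2
     else if l = 0 \<and> m = 2 \<and> n = 1 then - \<kappa> y / 2
     else if l = 1 \<and> m = 2 \<and> n = 3 then - \<kappa> y / 2
     else if l = 1 \<and> m = 3 \<and> n = 2 then \<kappa> y / 2
     else if l = 2 \<and> m = 1 \<and> n = 3 then \<kappa> y / 2
     else if l = 2 \<and> m = 3 \<and> n = 1 then - \<kappa> y / 2
     else if l = 0 \<and> m = 1 \<and> n = 3 then pd (pp_fun f) 1 y / 2
     else if l = 0 \<and> m = 3 \<and> n = 1 then pd (pp_fun f) 1 y / 2
     else if l = 0 \<and> m = 2 \<and> n = 3 then pd (pp_fun f) 2 y / 2
     else if l = 0 \<and> m = 3 \<and> n = 2 then pd (pp_fun f) 2 y / 2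
     else if l = 0 \<and> m = 3 \<and> n = 3 then pd (pp_fun f) 3 y / 2
     else if l = 1 \<and> m = 3 \<and> n = 3 then pd (pp_fun f) 1 y / 2
     else if l = 2 \<and> m = 3 \<and> n = 3 then pd (pp_fun f) 2 y / 2
     else 0)"

lemma christoffel_pp_metric: "christoffel (pp_metric f) = pp_conn f (\<lambda>_. 0)"
proof (intro ext)
  fix y l m n
  have "\<forall>l m n. christoffel (pp_metric f) y l m n = pp_conn f (\<lambda>_. 0) y l m n"
    unfolding christoffel_def ginv_pp_metric pd_pp_metric all_4
    by (simp add: sum_UNIV_4 pp_inv_metric_def pp_conn_def)
  then show "christoffel (pp_metric f) y l m n = pp_conn f (\<lambda>_. 0) y l m n" by blast
qed

text \<open>The lowered connection coefficients \<open>\<Gamma>\<^sub>c\<^sub>m\<^sub>n\<close> are recovered from their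
  symmetrisation \<open>M\<close> in the outer indices and their antisymmetrisation \<open>T\<close> in the lower
  indices (the Koszul formula with torsion).\<close>

lemma lowered_conn_eq:
  fixes \<Gamma> :: "4 \<Rightarrow> 4 \<Rightarrow> 4 \<Rightarrow> real"
  assumes M: "\<And>a b m. \<Gamma> a m b + \<Gamma> b m a = M m a b"
    and T: "\<And>c m n. \<Gamma> c m n - \<Gamma> c n m = T c m n"
  shows "\<Gamma> c m n = (M m c n + M n c m - M c m n) / 2 + (T c m n + T n c m + T m c n) / 2"
proof -
  have "\<Gamma> c m n = ((\<Gamma> c m n + \<Gamma> n m c) + (\<Gamma> c n m + \<Gamma> m n c) - (\<Gamma> m c n + \<Gamma> n c m)) / 2
     + ((\<Gamma> c m n - \<Gamma> c n m) + (\<Gamma> n c m - \<Gamma> n m c) + (\<Gamma> m c n - \<Gamma> m n c)) / 2"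
    by (simp add: field_simps)
  then show ?thesis by (simp only: M T)
qed

lemma metric_compatible_pp_metric_lowered:
  assumes "metric_compatible U (pp_metric f) G" "x \<in> U"
  shows "(\<Sum>l\<in>UNIV. pp_metric f x a l * G x l m b) + (\<Sum>l\<in>UNIV. pp_metric f x b l * G x l m a)
     = (if a = 3 \<and> b = 3 then pd (pp_fun f) m x else 0)"
proof -
  have "pd (\<lambda>y. pp_metric f y a b) m x - (\<Sum>c\<in>UNIV. G x c m a * pp_metric f x c b)
      - (\<Sum>c\<in>UNIV. G x c m b * pp_metric f x a c) = 0"
    using assms unfolding metric_compatible_def by blast
  moreover have "pp_metric f x c b = pp_metric f x b c" for c
    by (auto simp: pp_metric_def)
  ultimately show ?thesis
    unfolding pd_pp_metric by (simp add: mult.commute)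
qed

lemma axial_torsion_pp_metric_lowered:
  assumes "axial_torsion U (pp_metric f) G k" "x \<in> U"
  shows "(\<Sum>l\<in>UNIV. pp_metric f x c l * G x l m n) - (\<Sum>l\<in>UNIV. pp_metric f x c l * G x l n m)
     = k (x$3) * eps 0 c m n"
proof -
  have "(\<Sum>l\<in>UNIV. pp_metric f x c l * torsion G x l m n)
      = k (x$3) * (\<Sum>l\<in>UNIV. (if l = 0 then 1 else 0) * vol (pp_metric f) x * eps l c m n)"
    using assms unfolding axial_torsion_def by blast
  then show ?thesis
    unfolding torsion_def vol_pp_metric
    by (simp add: sum_UNIV_4 sum_subtractf right_diff_distrib)
qed

lemma pp_metric_lower_raise:
  "G x l m n = (\<Sum>c\<in>UNIV. pp_inv_metric f x l c * (\<Sum>l'\<in>UNIV. pp_metric f x c l' * G x l' m n))"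
proof -
  have "\<forall>l. G x l m n = (\<Sum>c\<in>UNIV. pp_inv_metric f x l c * (\<Sum>l'\<in>UNIV. pp_metric f x c l' * G x l' m n))"
    unfolding all_4 by (simp add: sum_UNIV_4 pp_inv_metric_def pp_metric_def)
  then show ?thesis by blast
qed

lemma conn_eq_pp_conn:
  assumes mc: "metric_compatible U (pp_metric f) G" and ax: "axial_torsion U (pp_metric f) G k"
    and x: "x \<in> U"
  shows "G x l m n = pp_conn f (phase_fun k) x l m n"
proof -
  define \<Gamma> where "\<Gamma> c m n = (\<Sum>l\<in>UNIV. pp_metric f x c l * G x l m n)" for c m n
  define M :: "4 \<Rightarrow> 4 \<Rightarrow> 4 \<Rightarrow> real"
    where "M m a b = (if a = 3 \<and> b = 3 then pd (pp_fun f) m x else 0)" for m a b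
  define T :: "4 \<Rightarrow> 4 \<Rightarrow> 4 \<Rightarrow> real" where "T c m n = k (x$3) * eps 0 c m n" for c m n
  have \<Gamma>: "\<Gamma> c m n = (M m c n + M n c m - M c m n) / 2 + (T c m n + T n c m + T m c n) / 2" for c m n
  proof (rule lowered_conn_eq)
    show "\<Gamma> a m b + \<Gamma> b m a = M m a b" for a b m
      unfolding \<Gamma>_def M_def by (rule metric_compatible_pp_metric_lowered[OF mc x])
    show "\<Gamma> c m n - \<Gamma> c n m = T c m n" for c m n
      unfolding \<Gamma>_def T_def by (rule axial_torsion_pp_metric_lowered[OF ax x])
  qed
  have raise: "G x l m n = (\<Sum>c\<in>UNIV. pp_inv_metric f x l c * \<Gamma> c m n)" for l m n
    unfolding \<Gamma>_def by (rule pp_metric_lower_raise)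
  have "\<forall>l m n. G x l m n = pp_conn f (phase_fun k) x l m n"
    apply (simp only: all_4)
    apply (simp only: raise sum_UNIV_4 pp_inv_metric_def)
    apply simp
    apply (simp only: \<Gamma> M_def T_def)
    apply (simp add: eps_def Rep_bit0_4)
    apply (simp add: pp_conn_def phase_fun_def)
    done
  then show ?thesis by blast
qed

section \<open>Curvature\<close>

text \<open>Only \<open>R\<^sup>0\<^sub>1 = R\<^sup>1\<^sub>3\<close> and \<open>R\<^sup>0\<^sub>2 = R\<^sup>2\<^sub>3\<close> survive; no two of these index pairs are
  transposes of each other, so every contraction \<open>R\<^sup>\<kappa>\<^sub>\<lambda> R\<^sup>\<lambda>\<^sub>\<kappa>\<close> vanishes.\<close>

definition pp_curv :: "(real \<Rightarrow> real \<Rightarrow> real \<Rightarrow> real) \<Rightarrow> (pt \<Rightarrow> real) \<Rightarrow> pt \<Rightarrow> 4 \<Rightarrow> 4 \<Rightarrow> 4 \<Rightarrow> 4 \<Rightarrow> real" where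
  "pp_curv f \<kappa> y k l m n =
    (let A = pd (pd (pp_fun f) 1) 1 y / 2 - \<kappa> y * \<kappa> y / 4;
         B = pd (pd (pp_fun f) 1) 2 y / 2 + pd \<kappa> 3 y / 2;
         C = pd (pd (pp_fun f) 1) 2 y / 2 - pd \<kappa> 3 y / 2;
         D = pd (pd (pp_fun f) 2) 2 y / 2 - \<kappa> y * \<kappa> y / 4 in
     if (k = 0 \<and> l = 1) \<or> (k = 1 \<and> l = 3) then
       (if m = 1 \<and> n = 3 then A else if m = 3 \<and> n = 1 then - A
        else if m = 2 \<and> n = 3 then B else if m = 3 \<and> n = 2 then - B else 0)
     else if (k = 0 \<and> l = 2) \<or> (k = 2 \<and> l = 3) then
       (if m = 1 \<and> n = 3 then C else if m = 3 \<and> n = 1 then - C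
        else if m = 2 \<and> n = 3 then D else if m = 3 \<and> n = 2 then - D else 0)
     else 0)"

lemma pp_curv_eq_0:
  assumes "\<not> ((k = 0 \<and> l = 1) \<or> (k = 1 \<and> l = 3))" "\<not> ((k = 0 \<and> l = 2) \<or> (k = 2 \<and> l = 3))"
  shows "pp_curv f \<kappa> y k l m n = 0"
  unfolding pp_curv_def Let_def if_not_P[OF assms(1)] if_not_P[OF assms(2)] by (rule refl)

lemma pp_curv_mult_swap_eq_0: "pp_curv f \<kappa> y k l m n * pp_curv f \<kappa> y l k a b = 0"
proof -
  have "\<forall>k l. pp_curv f \<kappa> y k l m n * pp_curv f \<kappa> y l k a b = 0"
    unfolding all_4 by (simp add: pp_curv_eq_0)
  then show ?thesis by blast
qed

lemma curv_pp_conn: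
  assumes U: "open U" "x \<in> U" and f: "cinf_on U (pp_fun f)" and \<kappa>: "cinf_on U \<kappa>"
    and inv: "translation_invariant \<kappa> 0" "translation_invariant \<kappa> 1" "translation_invariant \<kappa> 2"
  shows "curv (pp_conn f \<kappa>) x k l m n = pp_curv f \<kappa> x k l m n"
proof -
  have [simp]: "partial_differentiable \<kappa> i x" for i
    by (rule cinf_on_imp_partial_differentiable[OF \<kappa> U(2)])
  have [simp]: "partial_differentiable (pd (pp_fun f) j) i x" for i j
    by (rule cinf_on_imp_partial_differentiable[OF cinf_on_pd[OF f] U(2)])
  have [simp]: "pd \<kappa> 0 x = 0" "pd \<kappa> 1 x = 0" "pd \<kappa> 2 x = 0" using inv by simp_all
  have sym: "pd (pd (pp_fun f) i) j x = pd (pd (pp_fun f) j) i x" for i j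
    by (rule pd_pd_commute[OF U(1) f U(2)])
  note [simp] = sym[of 2 1] sym[of 3 1] sym[of 3 2]
  have "\<forall>k l m n. curv (pp_conn f \<kappa>) x k l m n = pp_curv f \<kappa> x k l m n"
    apply (simp only: all_4)
    apply (simp add: curv_def sum_UNIV_4 pp_conn_def)
    apply (simp add: pp_curv_def Let_def)
    done
  then show ?thesis by blast
qed

lemma curv_cong_open:
  assumes "open U" "x \<in> U" "\<And>y a b c. y \<in> U \<Longrightarrow> G y a b c = G' y a b c"
  shows "curv G x k l m n = curv G' x k l m n"
proof -
  have "pd (\<lambda>y. G y a b c) i x = pd (\<lambda>y. G' y a b c) i x" for a b c i
    by (rule pd_cong_open[OF assms(1,2)]) (rule assms(3))
  then show ?thesis unfolding curv_def using assms(2,3) by simp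
qed

lemma gen_ppwave_axialD:
  assumes "gen_ppwave_axial U f k G"
  shows "open U" "cinf_on U (pp_fun f)" "cinf_on U (phase_fun k)"
    "\<And>l m n. cinf_on U (\<lambda>x. G x l m n)"
    "metric_compatible U (pp_metric f) G" "axial_torsion U (pp_metric f) G k"
proof -
  have "(\<lambda>x. k (x$3)) = phase_fun k" "(\<lambda>x. f (x$1) (x$2) (x$3)) = pp_fun f"
    by (simp_all add: phase_fun_def pp_fun_def fun_eq_iff)
  then show "open U" "cinf_on U (pp_fun f)" "cinf_on U (phase_fun k)"
    "\<And>l m n. cinf_on U (\<lambda>x. G x l m n)"
    "metric_compatible U (pp_metric f) G" "axial_torsion U (pp_metric f) G k"
    using assms unfolding gen_ppwave_axial_def by auto
qed

lemma curv_gen_ppwave: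
  assumes G: "gen_ppwave_axial U f k G" and x: "x \<in> U"
  shows "curv G x = pp_curv f (phase_fun k) x"
proof (intro ext)
  fix k' l m n
  note G' = gen_ppwave_axialD[OF G]
  have "curv G x k' l m n = curv (pp_conn f (phase_fun k)) x k' l m n"
    by (rule curv_cong_open[OF G'(1) x]) (rule conn_eq_pp_conn[OF G'(5,6)])
  also have "\<dots> = pp_curv f (phase_fun k) x k' l m n"
    by (rule curv_pp_conn[OF G'(1) x G'(2,3)]) simp_all
  finally show "curv G x k' l m n = pp_curv f (phase_fun k) x k' l m n" .
qed

lemma ym_density_gen_ppwave:
  assumes "gen_ppwave_axial U f k G" "x \<in> U"
  shows "ym_density g G x = 0"
  unfolding ym_density_def curv_gen_ppwave[OF assms] by (simp add: pp_curv_mult_swap_eq_0)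

lemma EL_metric_gen_ppwave:
  assumes G: "gen_ppwave_axial U f k G"
  shows "EL_metric U (pp_metric f) G"
  unfolding EL_metric_def
proof (intro allI impI)
  fix h :: tensor2 and K :: "pt set"
  assume "compact K \<and> K \<subseteq> U \<and> (\<forall>a b. cinf_on UNIV (\<lambda>x. h x a b) \<and> (\<forall>x. h x a b = h x b a) \<and>
    (\<forall>x. x \<notin> K \<longrightarrow> h x a b = 0))"
  then have "ym_action K (\<lambda>x a b. pp_metric f x a b + \<epsilon> * h x a b) G = 0" for \<epsilon>
    unfolding ym_action_def using ym_density_gen_ppwave[OF G]
    by (simp add: subset_iff integral_cong[of K _ "\<lambda>_. 0"])
  then show "((\<lambda>\<epsilon>. ym_action K (\<lambda>x a b. pp_metric f x a b + \<epsilon> * h x a b) G)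
      has_real_derivative 0) (at 0)"
    by simp
qed

section \<open>Levi-Civita Ricci curvature\<close>

lemma lc_ricci_pp_metric:
  assumes "open U" "x \<in> U" "cinf_on U (pp_fun f)"
  shows "lc_ricci (pp_metric f) x l n =
    (if l = 3 \<and> n = 3 then (pd (pd (pp_fun f) 1) 1 x + pd (pd (pp_fun f) 2) 2 x) / 2 else 0)"
proof -
  have c: "curv (christoffel (pp_metric f)) x k l m n = pp_curv f (\<lambda>_. 0) x k l m n" for k l m n
    unfolding christoffel_pp_metric by (rule curv_pp_conn[OF assms]) simp_all
  have "\<forall>l n. lc_ricci (pp_metric f) x l n =
    (if l = 3 \<and> n = 3 then (pd (pd (pp_fun f) 1) 1 x + pd (pd (pp_fun f) 2) 2 x) / 2 else 0)"
    unfolding lc_ricci_def c all_4 by (simp add: sum_UNIV_4 pp_curv_def Let_def)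
  then show ?thesis by blast
qed

lemma parallel_lc_ricci_pp_metric:
  assumes U: "open U" "x \<in> U" and f: "cinf_on U (pp_fun f)"
    and par: "parallel_lc_ricci U (pp_metric f)"
  shows "pd (pd (pd (pp_fun f) 1) 1) m x + pd (pd (pd (pp_fun f) 2) 2) m x = 0"
proof -
  have "pd (\<lambda>y. lc_ricci (pp_metric f) y 3 3) m x
        - (\<Sum>c\<in>UNIV. christoffel (pp_metric f) x c m 3 * lc_ricci (pp_metric f) x c 3)
        - (\<Sum>c\<in>UNIV. christoffel (pp_metric f) x c m 3 * lc_ricci (pp_metric f) x 3 c) = 0"
    using par U unfolding parallel_lc_ricci_def by blast
  moreover have "(\<Sum>c\<in>UNIV. christoffel (pp_metric f) x c m 3 * lc_ricci (pp_metric f) x c 3) = 0"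
    "(\<Sum>c\<in>UNIV. christoffel (pp_metric f) x c m 3 * lc_ricci (pp_metric f) x 3 c) = 0"
    unfolding lc_ricci_pp_metric[OF U f] christoffel_pp_metric
    by (simp_all add: sum_UNIV_4 pp_conn_def)
  moreover have "pd (\<lambda>y. lc_ricci (pp_metric f) y 3 3) m x
      = pd (\<lambda>y. (pd (pd (pp_fun f) 1) 1 y + pd (pd (pp_fun f) 2) 2 y) / 2) m x"
    by (rule pd_cong_open[OF U]) (simp add: lc_ricci_pp_metric[OF U(1) _ f])
  moreover have "partial_differentiable (pd (pd (pp_fun f) i) j) m x" for i j
    by (rule cinf_on_imp_partial_differentiable[OF cinf_on_pd[OF cinf_on_pd[OF f]] U(2)])
  ultimately show ?thesis by simp
qed

lemma gen_ppwave_third_pd: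
  assumes G: "gen_ppwave_axial U f k G" and x: "x \<in> U"
    and par: "parallel_lc_ricci U (pp_metric f)"
  shows "pd (pd (pd (pp_fun f) 1) 2) 2 x = - pd (pd (pd (pp_fun f) 1) 1) 1 x"
    "pd (pd (pd (pp_fun f) 1) 2) 1 x = - pd (pd (pd (pp_fun f) 2) 2) 2 x"
proof -
  note G' = gen_ppwave_axialD[OF G]
  have "pd (pd (pd (pp_fun f) 2) 2) 1 x = pd (pd (pd (pp_fun f) 2) 1) 2 x"
    by (rule pd_pd_commute[OF G'(1) cinf_on_pd[OF G'(2)] x])
  also have "\<dots> = pd (pd (pd (pp_fun f) 1) 2) 2 x"
    by (rule pd_cong_open[OF G'(1) x], rule pd_pd_commute[OF G'(1) G'(2)])
  finally show "pd (pd (pd (pp_fun f) 1) 2) 2 x = - pd (pd (pd (pp_fun f) 1) 1) 1 x"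
    using parallel_lc_ricci_pp_metric[OF G'(1) x G'(2) par, of 1] by simp
  have "pd (pd (pd (pp_fun f) 1) 1) 2 x = pd (pd (pd (pp_fun f) 1) 2) 1 x"
    by (rule pd_pd_commute[OF G'(1) cinf_on_pd[OF G'(2)] x])
  then show "pd (pd (pd (pp_fun f) 1) 2) 1 x = - pd (pd (pd (pp_fun f) 2) 2) 2 x"
    using parallel_lc_ricci_pp_metric[OF G'(1) x G'(2) par, of 2] by simp
qed

section \<open>Integrals of compactly supported derivatives\<close>

lemma integral_eq_integral_UNIV:
  fixes V :: "pt \<Rightarrow> real"
  assumes "\<And>y. y \<notin> K \<Longrightarrow> V y = 0" "K \<subseteq> S"
  shows "integral S V = integral UNIV V"
proof -
  have "(\<lambda>x. if x \<in> S then V x else 0) = V" using assms by (auto simp: fun_eq_iff)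
  then show ?thesis using integral_restrict_UNIV[of S V] by simp
qed

lemma continuous_on_UNIV_compact_support:
  fixes P :: "pt \<Rightarrow> real"
  assumes "open U" "K \<subseteq> U" "compact K" "continuous_on U P" "\<And>x. x \<notin> K \<Longrightarrow> P x = 0"
  shows "continuous_on UNIV P"
proof -
  have "continuous_on (- K) P"
    using continuous_on_cong[of "- K" "- K" P "\<lambda>_. 0"] assms(5) by auto
  moreover have "open (- K)" using assms(3) compact_imp_closed by blast
  moreover have "U \<union> - K = UNIV" using assms(2) by auto
  ultimately show ?thesis using continuous_on_open_Un[OF assms(1) _ assms(4)] by metis
qed

text \<open>Translating \<open>V\<close> along \<open>x\<^sup>a\<close> does not change its integral over a box around the
  support; differentiating under the integral sign then gives \<open>\<integral> \<partial>\<^sub>a V = 0\<close>.\<close>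

lemma integral_pd_compact_support:
  fixes V DV :: "pt \<Rightarrow> real" and lo hi :: pt
  assumes hV: "\<And>y. has_partial V a y (DV y)"
    and cV: "continuous_on UNIV V" and cDV: "continuous_on UNIV DV"
    and K0: "\<And>y. y \<notin> K \<Longrightarrow> V y = 0" and Kb: "K \<subseteq> cbox lo hi"
  shows "integral (cbox (lo - (\<chi> i. 1)) (hi + (\<chi> i. 1))) DV = 0"
proof -
  define e :: pt where "e = axis a 1"
  define l1 :: pt where "l1 = lo - (\<chi> i. 1)"
  define h1 :: pt where "h1 = hi + (\<chi> i. 1)"
  define F where "F s = integral (cbox l1 h1) (\<lambda>y. V (y + s *\<^sub>R e))" for s
  have const: "F s = integral UNIV V" if s: "s \<in> {-1..1}" for s
  proof -
    have "F s = integral (cbox (l1 + s *\<^sub>R e) (h1 + s *\<^sub>R e)) V"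
      unfolding F_def using integral_shift_cbox[of "l1 + s *\<^sub>R e" "s *\<^sub>R e" "h1 + s *\<^sub>R e" V]
      by simp
    also have "\<dots> = integral UNIV V"
    proof (rule integral_eq_integral_UNIV[OF K0])
      show "K \<subseteq> cbox (l1 + s *\<^sub>R e) (h1 + s *\<^sub>R e)"
      proof
        fix y assume "y \<in> K"
        then have y: "lo $ i \<le> y $ i \<and> y $ i \<le> hi $ i" for i using Kb by (auto simp: mem_box_cart)
        have "(l1 + s *\<^sub>R e) $ i \<le> y $ i \<and> y $ i \<le> (h1 + s *\<^sub>R e) $ i" for i
          using y[of i] s by (auto simp: l1_def h1_def e_def axis_def)
        then show "y \<in> cbox (l1 + s *\<^sub>R e) (h1 + s *\<^sub>R e)" by (simp add: mem_box_cart)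
      qed
    qed
    finally show ?thesis .
  qed
  have "(F has_field_derivative integral (cbox l1 h1) (\<lambda>y. DV (y + 0 *\<^sub>R e))) (at 0 within {-1..1})"
    unfolding F_def
  proof (rule leibniz_rule_field_derivative[where fx = "\<lambda>s y. DV (y + s *\<^sub>R e)"])
    fix s :: real and y :: pt
    show "((\<lambda>s. V (y + s *\<^sub>R e)) has_field_derivative DV (y + s *\<^sub>R e)) (at s within {-1..1})"
      unfolding e_def by (rule has_field_derivative_at_within, rule has_partial_shift, rule hV)
  next
    fix s :: real
    show "(\<lambda>y. V (y + s *\<^sub>R e)) integrable_on cbox l1 h1"
      by (rule integrable_continuous, rule continuous_on_compose2[OF cV]) (auto intro!: continuous_intros)
  next
    have "continuous_on ({-1..1} \<times> cbox l1 h1) (\<lambda>p. DV (snd p + fst p *\<^sub>R e))"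
      by (rule continuous_on_compose2[OF cDV]) (auto intro!: continuous_intros)
    moreover have "(\<lambda>(s, y). DV (y + s *\<^sub>R e)) = (\<lambda>p. DV (snd p + fst p *\<^sub>R e))"
      by (auto simp: fun_eq_iff)
    ultimately show "continuous_on ({-1..1} \<times> cbox l1 h1) (\<lambda>(s, y). DV (y + s *\<^sub>R e))"
      by simp
  qed auto
  then have der: "(F has_field_derivative integral (cbox l1 h1) DV) (at 0)"
    using at_within_interior[of 0 "{-1..1::real}"] by simp
  have "eventually (\<lambda>s. F s = integral UNIV V) (nhds 0)"
    unfolding eventually_nhds_metric
  proof (intro exI[of _ 1] conjI allI impI)
    fix s :: real assume "dist s 0 < 1"
    then show "F s = integral UNIV V" by (intro const) (auto simp: dist_real_def)
  qed simp
  then have "(F has_field_derivative 0) (at 0)"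
    using DERIV_cong_ev[of 0 0 "\<lambda>s. integral UNIV V" F 0 0] by (simp add: eventually_mono)
  then show ?thesis using DERIV_unique[OF der] unfolding l1_def h1_def by simp
qed

definition c1_on :: "pt set \<Rightarrow> (pt \<Rightarrow> real) \<Rightarrow> bool" where
  "c1_on U F \<longleftrightarrow> (\<forall>i. \<forall>y\<in>U. partial_differentiable F i y) \<and> continuous_on U F \<and>
     (\<forall>i. continuous_on U (pd F i))"

lemma c1_on_add [intro]:
  assumes "c1_on U A" "c1_on U B"
  shows "c1_on U (\<lambda>y. A y + B y)"
proof -
  have "continuous_on U (pd (\<lambda>y. A y + B y) i)" for i
    using assms unfolding c1_on_def
    by (subst continuous_on_cong[OF refl, where g = "\<lambda>y. pd A i y + pd B i y"])
       (auto intro!: continuous_intros)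
  then show ?thesis using assms unfolding c1_on_def by (auto intro!: continuous_intros)
qed

lemma c1_on_diff [intro]:
  assumes "c1_on U A" "c1_on U B"
  shows "c1_on U (\<lambda>y. A y - B y)"
proof -
  have "continuous_on U (pd (\<lambda>y. A y - B y) i)" for i
    using assms unfolding c1_on_def
    by (subst continuous_on_cong[OF refl, where g = "\<lambda>y. pd A i y - pd B i y"])
       (auto intro!: continuous_intros)
  then show ?thesis using assms unfolding c1_on_def by (auto intro!: continuous_intros)
qed

lemma c1_on_mult [intro]:
  assumes "c1_on U A" "c1_on U B"
  shows "c1_on U (\<lambda>y. A y * B y)"
proof -
  have "continuous_on U (pd (\<lambda>y. A y * B y) i)" for i
    using assms unfolding c1_on_def
    by (subst continuous_on_cong[OF refl, where g = "\<lambda>y. pd A i y * B y + A y * pd B i y"])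
       (auto intro!: continuous_intros)
  then show ?thesis using assms unfolding c1_on_def by (auto intro!: continuous_intros)
qed

lemma c1_on_const [intro]: "c1_on U (\<lambda>y. c)"
  unfolding c1_on_def by (auto intro!: continuous_intros)

lemma c1_on_cmult [intro]: "c1_on U A \<Longrightarrow> c1_on U (\<lambda>y. c * A y)"
  using c1_on_mult[OF c1_on_const] by blast

lemma c1_on_divc [intro]: "c1_on U A \<Longrightarrow> c1_on U (\<lambda>y. A y / c)"
  using c1_on_mult[OF _ c1_on_const, of U A "1/c"] by simp

lemma c1_on_minus [intro]: "c1_on U A \<Longrightarrow> c1_on U (\<lambda>y. - A y)"
  using c1_on_cmult[of U A "-1"] by simp

lemma cinf_on_imp_c1_on: "cinf_on U F \<Longrightarrow> c1_on U F"
  unfolding c1_on_def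
  using cinf_on_imp_partial_differentiable cinf_on_imp_continuous_on cinf_on_pd by blast

lemma c1_on_subset: "c1_on V F \<Longrightarrow> U \<subseteq> V \<Longrightarrow> c1_on U F"
  unfolding c1_on_def by (meson continuous_on_subset subsetD)

section \<open>Variation of the connection\<close>

definition curv_lin :: "conn \<Rightarrow> conn \<Rightarrow> pt \<Rightarrow> 4 \<Rightarrow> 4 \<Rightarrow> 4 \<Rightarrow> 4 \<Rightarrow> real" where
  "curv_lin G H x k l m n = pd (\<lambda>y. H y k n l) m x - pd (\<lambda>y. H y k m l) n x
     + (\<Sum>e\<in>UNIV. G x k m e * H x e n l + H x k m e * G x e n l
                 - G x k n e * H x e m l - H x k n e * G x e m l)"

definition curv_quad :: "conn \<Rightarrow> pt \<Rightarrow> 4 \<Rightarrow> 4 \<Rightarrow> 4 \<Rightarrow> 4 \<Rightarrow> real" where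
  "curv_quad H x k l m n = (\<Sum>e\<in>UNIV. H x k m e * H x e n l - H x k n e * H x e m l)"

lemma curv_add_scaled:
  assumes "\<And>a b c i. partial_differentiable (\<lambda>y. G y a b c) i x"
    and "\<And>a b c i. partial_differentiable (\<lambda>y. H y a b c) i x"
  shows "curv (\<lambda>y l m n. G y l m n + \<epsilon> * H y l m n) x k l m n
     = curv G x k l m n + \<epsilon> * curv_lin G H x k l m n + \<epsilon>\<^sup>2 * curv_quad H x k l m n"
  unfolding curv_def curv_lin_def curv_quad_def
  by (simp add: assms algebra_simps power2_eq_square sum.distrib sum_subtractf sum_distrib_left)

definition ym_form :: "(4 \<Rightarrow> 4 \<Rightarrow> 4 \<Rightarrow> 4 \<Rightarrow> real) \<Rightarrow> (4 \<Rightarrow> 4 \<Rightarrow> 4 \<Rightarrow> 4 \<Rightarrow> real) \<Rightarrow> (4 \<Rightarrow> 4 \<Rightarrow> real) \<Rightarrow> real"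
  where "ym_form X Y gi = (\<Sum>k\<in>UNIV. \<Sum>l\<in>UNIV. \<Sum>m\<in>UNIV. \<Sum>n\<in>UNIV. \<Sum>a\<in>UNIV. \<Sum>b\<in>UNIV.
     X k l m n * Y l k a b * gi m a * gi n b)"

lemma ym_density_pp_metric:
  "ym_density (pp_metric f) G x = ym_form (curv G x) (curv G x) (pp_inv_metric f x)"
  unfolding ym_density_def ym_form_def ginv_pp_metric vol_pp_metric by simp

lemma ym_form_add_left: "ym_form (\<lambda>k l m n. X k l m n + Y k l m n) Z gi = ym_form X Z gi + ym_form Y Z gi"
  unfolding ym_form_def by (simp add: distrib_right sum.distrib)

lemma ym_form_add_right: "ym_form Z (\<lambda>k l m n. X k l m n + Y k l m n) gi = ym_form Z X gi + ym_form Z Y gi"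
  unfolding ym_form_def by (simp add: distrib_left distrib_right sum.distrib)

lemma ym_form_scale_left: "ym_form (\<lambda>k l m n. c * X k l m n) Z gi = c * ym_form X Z gi"
  unfolding ym_form_def by (simp add: sum_distrib_left mult.assoc)

lemma ym_form_scale_right: "ym_form Z (\<lambda>k l m n. c * X k l m n) gi = c * ym_form Z X gi"
  unfolding ym_form_def by (simp add: sum_distrib_left mult.assoc mult.left_commute)

lemma ym_form_zero_left: "ym_form (\<lambda>k l m n. 0) Y gi = 0"
  unfolding ym_form_def by simp

lemma ym_form_zero_right: "ym_form Y (\<lambda>k l m n. 0) gi = 0"
  unfolding ym_form_def by simp

lemma ym_form_quadratic_expand:
  "ym_form (\<lambda>k l m n. R k l m n + e * S k l m n + e\<^sup>2 * Q k l m n)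
           (\<lambda>k l m n. R k l m n + e * S k l m n + e\<^sup>2 * Q k l m n) gi
   = ym_form R R gi + e * (ym_form R S gi + ym_form S R gi)
     + e\<^sup>2 * (ym_form R Q gi + ym_form S S gi + ym_form Q R gi)
     + e^3 * (ym_form S Q gi + ym_form Q S gi) + e^4 * ym_form Q Q gi"
  by (simp only: ym_form_add_left ym_form_add_right ym_form_scale_left ym_form_scale_right)
     (simp add: algebra_simps power2_eq_square power3_eq_cube power4_eq_xxxx)

lemma ym_form_pp_curv: "ym_form (pp_curv f \<kappa> x) (pp_curv f \<kappa> x) gi = 0"
  unfolding ym_form_def by (simp add: pp_curv_mult_swap_eq_0)

lemma continuous_on_If_const [continuous_intros]:
  "continuous_on U A \<Longrightarrow> continuous_on U B \<Longrightarrow> continuous_on U (\<lambda>x. if P then A x else B x)"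
  by (cases P) auto

lemma continuous_on_ym_form:
  assumes "\<And>k l m n. continuous_on U (\<lambda>x. X x k l m n)" "\<And>k l m n. continuous_on U (\<lambda>x. Y x k l m n)"
    "\<And>m a. continuous_on U (\<lambda>x. gi x m a)"
  shows "continuous_on U (\<lambda>x. ym_form (X x) (Y x) (gi x))"
  unfolding ym_form_def by (intro continuous_intros assms)

definition raise_pair :: "(4 \<Rightarrow> 4 \<Rightarrow> real) \<Rightarrow> (4 \<Rightarrow> 4 \<Rightarrow> real) \<Rightarrow> 4 \<Rightarrow> 4 \<Rightarrow> real" where
  "raise_pair Y gi m n = (\<Sum>a\<in>UNIV. \<Sum>b\<in>UNIV. Y a b * gi m a * gi n b)"

lemma ym_form_raise_pair:
  "ym_form X Y gi = (\<Sum>k\<in>UNIV. \<Sum>l\<in>UNIV. \<Sum>m\<in>UNIV. \<Sum>n\<in>UNIV. X k l m n * raise_pair (Y l k) gi m n)"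
  unfolding ym_form_def raise_pair_def by (simp add: sum_distrib_left mult.assoc)

lemma raise_pair_pp_inv_metric: "raise_pair Y (pp_inv_metric f x) m n =
   (let Z = (\<lambda>a. if n = 0 then Y a 3 - f (x$1) (x$2) (x$3) * Y a 0 else if n = 3 then Y a 0 else - Y a n) in
    if m = 0 then Z 3 - f (x$1) (x$2) (x$3) * Z 0 else if m = 3 then Z 0 else - Z m)"
proof -
  have "\<forall>m n. raise_pair Y (pp_inv_metric f x) m n =
   (let Z = (\<lambda>a. if n = 0 then Y a 3 - f (x$1) (x$2) (x$3) * Y a 0 else if n = 3 then Y a 0 else - Y a n) in
    if m = 0 then Z 3 - f (x$1) (x$2) (x$3) * Z 0 else if m = 3 then Z 0 else - Z m)"
    unfolding raise_pair_def all_4 by (simp add: sum_UNIV_4 pp_inv_metric_def Let_def algebra_simps)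
  then show ?thesis by blast
qed

text \<open>The first variation of the Lagrangian is the divergence \<open>\<partial>\<^sub>a V\<^sup>a\<close> of this current: the
  terms without derivatives of \<open>H\<close> cancel exactly because \<open>\<Delta>f\<close> is constant
  (lemma \<open>gen_ppwave_third_pd\<close>).\<close>

definition ym_current :: "(real \<Rightarrow> real \<Rightarrow> real \<Rightarrow> real) \<Rightarrow> (real \<Rightarrow> real) \<Rightarrow> conn \<Rightarrow> 4 \<Rightarrow> pt \<Rightarrow> real" where
  "ym_current f k H a =
    (if a = 0 then (\<lambda>y. 4 * (
        (pd (pd (pp_fun f) 1) 1 y / 2 - phase_fun k y * phase_fun k y / 4) * (H y 1 1 0 + H y 3 1 1)
      + (pd (pd (pp_fun f) 1) 2 y / 2 + pd (phase_fun k) 3 y / 2) * (H y 1 2 0 + H y 3 2 1)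
      + (pd (pd (pp_fun f) 1) 2 y / 2 - pd (phase_fun k) 3 y / 2) * (H y 2 1 0 + H y 3 1 2)
      + (pd (pd (pp_fun f) 2) 2 y / 2 - phase_fun k y * phase_fun k y / 4) * (H y 2 2 0 + H y 3 2 2)))
     else if a = 1 then (\<lambda>y. - 4 * (
        (pd (pd (pp_fun f) 1) 1 y / 2 - phase_fun k y * phase_fun k y / 4) * (H y 1 0 0 + H y 3 0 1)
      + (pd (pd (pp_fun f) 1) 2 y / 2 - pd (phase_fun k) 3 y / 2) * (H y 2 0 0 + H y 3 0 2)))
     else if a = 2 then (\<lambda>y. - 4 * (
        (pd (pd (pp_fun f) 1) 2 y / 2 + pd (phase_fun k) 3 y / 2) * (H y 1 0 0 + H y 3 0 1)
      + (pd (pd (pp_fun f) 2) 2 y / 2 - phase_fun k y * phase_fun k y / 4) * (H y 2 0 0 + H y 3 0 2)))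
     else (\<lambda>y. 0))"

lemma first_variation_eq_divergence:
  assumes G: "gen_ppwave_axial U f k G" and x: "x \<in> U"
    and par: "parallel_lc_ricci U (pp_metric f)"
    and H: "\<And>l m n. cinf_on UNIV (\<lambda>x. H x l m n)"
  shows "ym_form (curv G x) (curv_lin G H x) (pp_inv_metric f x)
       + ym_form (curv_lin G H x) (curv G x) (pp_inv_metric f x)
       = (\<Sum>a\<in>UNIV. pd (ym_current f k H a) a x)"
proof -
  note G' = gen_ppwave_axialD[OF G]
  have Gx: "G x a b c = pp_conn f (phase_fun k) x a b c" for a b c
    by (rule conn_eq_pp_conn[OF G'(5,6) x])
  have [simp]: "partial_differentiable (\<lambda>y. H y a b c) i x" for a b c i
    by (rule cinf_on_imp_partial_differentiable[OF H]) simp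
  have [simp]: "partial_differentiable (pd (pd (pp_fun f) i) j) i' x" for i j i'
    by (rule cinf_on_imp_partial_differentiable[OF cinf_on_pd[OF cinf_on_pd[OF G'(2)]] x])
  have [simp]: "partial_differentiable (phase_fun k) i x" for i
    by (rule cinf_on_imp_partial_differentiable[OF G'(3) x])
  have [simp]: "partial_differentiable (pd (phase_fun k) j) i x" for i j
    by (rule cinf_on_imp_partial_differentiable[OF cinf_on_pd[OF G'(3)] x])
  note third = gen_ppwave_third_pd[OF G x par]
  show ?thesis
    unfolding curv_gen_ppwave[OF G x]
    apply (simp only: ym_form_raise_pair sum_UNIV_4)
    apply (simp add: pp_curv_def Let_def raise_pair_pp_inv_metric)
    apply (simp add: curv_lin_def sum_UNIV_4 Gx pp_conn_def ym_current_def third)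
    apply (simp add: field_simps)
    done
qed

section \<open>The Euler--Lagrange equation for the connection\<close>

context
  fixes U :: "pt set" and f :: "real \<Rightarrow> real \<Rightarrow> real \<Rightarrow> real" and k :: "real \<Rightarrow> real"
    and G H :: conn and K :: "pt set"
  assumes G: "gen_ppwave_axial U f k G"
    and par: "parallel_lc_ricci U (pp_metric f)"
    and H: "\<And>l m n. cinf_on UNIV (\<lambda>x. H x l m n)"
    and H0: "\<And>l m n x. x \<notin> K \<Longrightarrow> H x l m n = 0"
    and K: "compact K" "K \<subseteq> U"
begin

lemma open_Compl_K: "open (- K)"
  using K(1) compact_imp_closed by blast

lemma pd_H_outside: "x \<notin> K \<Longrightarrow> pd (\<lambda>y. H y a b c) i x = 0"
  using pd_cong_open[OF open_Compl_K, of x "\<lambda>y. H y a b c" "\<lambda>y. 0" i] H0 by simp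

lemma curv_lin_outside: "x \<notin> K \<Longrightarrow> curv_lin G H x = (\<lambda>k l m n. 0)"
  by (intro ext) (simp add: curv_lin_def pd_H_outside H0)

lemma curv_quad_outside: "x \<notin> K \<Longrightarrow> curv_quad H x = (\<lambda>k l m n. 0)"
  by (intro ext) (simp add: curv_quad_def H0)

lemma continuous_on_G:
  "continuous_on U (\<lambda>x. G x a b c)" "continuous_on U (\<lambda>x. pd (\<lambda>y. G y a b c) i x)"
  using cinf_on_imp_continuous_on[OF gen_ppwave_axialD(4)[OF G]]
    cinf_on_imp_continuous_on[OF cinf_on_pd[OF gen_ppwave_axialD(4)[OF G]]] by auto

lemma continuous_on_H:
  "continuous_on U (\<lambda>x. H x a b c)" "continuous_on U (\<lambda>x. pd (\<lambda>y. H y a b c) i x)"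
  using continuous_on_subset[OF cinf_on_imp_continuous_on[OF H]]
    continuous_on_subset[OF cinf_on_imp_continuous_on[OF cinf_on_pd[OF H]]] by auto

lemma continuous_on_curv: "continuous_on U (\<lambda>x. curv G x k' l m n)"
  unfolding curv_def by (intro continuous_intros continuous_on_G)

lemma continuous_on_curv_lin: "continuous_on U (\<lambda>x. curv_lin G H x k' l m n)"
  unfolding curv_lin_def by (intro continuous_intros continuous_on_G continuous_on_H)

lemma continuous_on_curv_quad: "continuous_on U (\<lambda>x. curv_quad H x k' l m n)"
  unfolding curv_quad_def by (intro continuous_intros continuous_on_H)

lemma continuous_on_pp_inv_metric: "continuous_on U (\<lambda>x. pp_inv_metric f x m a)"
proof -
  have "continuous_on U (\<lambda>x. f (x$1) (x$2) (x$3))"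
    using cinf_on_imp_continuous_on[OF gen_ppwave_axialD(2)[OF G]] unfolding pp_fun_def .
  then show ?thesis unfolding pp_inv_metric_def by (intro continuous_intros)
qed

lemma ym_current_outside: "y \<notin> K \<Longrightarrow> ym_current f k H a y = 0"
  unfolding ym_current_def by (simp add: H0)

lemma c1_on_ym_current: "c1_on U (ym_current f k H a)"
proof -
  note G' = gen_ppwave_axialD[OF G]
  have [intro]: "c1_on U (pd (pd (pp_fun f) i) j)" for i j
    by (rule cinf_on_imp_c1_on[OF cinf_on_pd[OF cinf_on_pd[OF G'(2)]]])
  have [intro]: "c1_on U (phase_fun k)" by (rule cinf_on_imp_c1_on[OF G'(3)])
  have [intro]: "c1_on U (pd (phase_fun k) j)" for j by (rule cinf_on_imp_c1_on[OF cinf_on_pd[OF G'(3)]])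
  have [intro]: "c1_on U (\<lambda>y. H y l b c)" for l b c
    by (rule c1_on_subset[OF cinf_on_imp_c1_on[OF H]]) simp
  have "\<forall>a. c1_on U (ym_current f k H a)"
    unfolding all_4 by (simp add: ym_current_def; intro conjI c1_on_add c1_on_diff c1_on_mult
      c1_on_cmult c1_on_divc c1_on_minus c1_on_const; blast)
  then show ?thesis by blast
qed

lemma pd_ym_current_outside: "y \<notin> K \<Longrightarrow> pd (ym_current f k H a) i y = 0"
  using pd_cong_open[OF open_Compl_K, of y "ym_current f k H a" "\<lambda>_. 0" i] ym_current_outside
  by simp

lemma partial_differentiable_ym_current: "partial_differentiable (ym_current f k H a) i y"
proof (cases "y \<in> U")
  case True
  then show ?thesis using c1_on_ym_current unfolding c1_on_def by blast
next
  case False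
  then have "y \<in> - K" using K(2) by auto
  then show ?thesis using partial_differentiable_cong_open[OF open_Compl_K, of y
      "ym_current f k H a" "\<lambda>_. 0" i] ym_current_outside by simp
qed

lemma integral_divergence_ym_current:
  assumes "K \<subseteq> cbox lo hi"
  shows "integral (cbox (lo - (\<chi> i. 1)) (hi + (\<chi> i. 1))) (\<lambda>x. \<Sum>a\<in>UNIV. pd (ym_current f k H a) a x) = 0"
proof -
  have cont: "continuous_on UNIV (ym_current f k H a)" "continuous_on UNIV (pd (ym_current f k H a) a)"
    for a
    using c1_on_ym_current gen_ppwave_axialD(1)[OF G] K ym_current_outside pd_ym_current_outside
    unfolding c1_on_def by (metis continuous_on_UNIV_compact_support)+
  have "integral (cbox (lo - (\<chi> i. 1)) (hi + (\<chi> i. 1))) (pd (ym_current f k H a) a) = 0" for a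
    using has_partial_pd[OF partial_differentiable_ym_current] cont ym_current_outside assms
    by (rule integral_pd_compact_support)
  moreover have "(pd (ym_current f k H a) a) integrable_on cbox (lo - (\<chi> i. 1)) (hi + (\<chi> i. 1))" for a
    by (rule integrable_continuous, rule continuous_on_subset[OF cont(2)]) simp
  ultimately show ?thesis by (simp add: integral_sum)
qed

definition var_coeff1 :: "pt \<Rightarrow> real" where
  "var_coeff1 x = ym_form (curv G x) (curv_lin G H x) (pp_inv_metric f x)
     + ym_form (curv_lin G H x) (curv G x) (pp_inv_metric f x)"

definition var_coeff2 :: "pt \<Rightarrow> real" where
  "var_coeff2 x = ym_form (curv G x) (curv_quad H x) (pp_inv_metric f x)
     + ym_form (curv_lin G H x) (curv_lin G H x) (pp_inv_metric f x)
     + ym_form (curv_quad H x) (curv G x) (pp_inv_metric f x)"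

definition var_coeff3 :: "pt \<Rightarrow> real" where
  "var_coeff3 x = ym_form (curv_lin G H x) (curv_quad H x) (pp_inv_metric f x)
     + ym_form (curv_quad H x) (curv_lin G H x) (pp_inv_metric f x)"

definition var_coeff4 :: "pt \<Rightarrow> real" where
  "var_coeff4 x = ym_form (curv_quad H x) (curv_quad H x) (pp_inv_metric f x)"

lemma var_coeff_outside:
  "x \<notin> K \<Longrightarrow> var_coeff1 x = 0 \<and> var_coeff2 x = 0 \<and> var_coeff3 x = 0 \<and> var_coeff4 x = 0"
  by (simp add: var_coeff1_def var_coeff2_def var_coeff3_def var_coeff4_def
      curv_lin_outside curv_quad_outside ym_form_zero_left ym_form_zero_right)

lemma continuous_on_var_coeff:
  "continuous_on UNIV var_coeff1" "continuous_on UNIV var_coeff2"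
  "continuous_on UNIV var_coeff3" "continuous_on UNIV var_coeff4"
proof -
  note glue = continuous_on_UNIV_compact_support[OF gen_ppwave_axialD(1)[OF G] K(2) K(1)]
  note c = continuous_on_curv continuous_on_curv_lin continuous_on_curv_quad
  note f = continuous_on_ym_form[OF _ _ continuous_on_pp_inv_metric]
  show "continuous_on UNIV var_coeff1" "continuous_on UNIV var_coeff2"
    "continuous_on UNIV var_coeff3" "continuous_on UNIV var_coeff4"
    unfolding var_coeff1_def var_coeff2_def var_coeff3_def var_coeff4_def
    by (intro glue continuous_intros f c; use var_coeff_outside in
      \<open>simp add: var_coeff1_def var_coeff2_def var_coeff3_def var_coeff4_def\<close>)+
qed

lemma ym_density_perturbed:
  assumes x: "x \<in> U"
  shows "ym_density (pp_metric f) (\<lambda>x l m n. G x l m n + \<epsilon> * H x l m n) x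
    = \<epsilon> * var_coeff1 x + \<epsilon>\<^sup>2 * var_coeff2 x + \<epsilon>^3 * var_coeff3 x + \<epsilon>^4 * var_coeff4 x"
proof -
  have curv: "curv (\<lambda>x l m n. G x l m n + \<epsilon> * H x l m n) x
      = (\<lambda>k l m n. curv G x k l m n + \<epsilon> * curv_lin G H x k l m n + \<epsilon>\<^sup>2 * curv_quad H x k l m n)"
  proof (intro ext curv_add_scaled)
    show "partial_differentiable (\<lambda>y. G y a b c) i x" for a b c i
      by (rule cinf_on_imp_partial_differentiable[OF gen_ppwave_axialD(4)[OF G] x])
    show "partial_differentiable (\<lambda>y. H y a b c) i x" for a b c i
      by (rule cinf_on_imp_partial_differentiable[OF H]) simp
  qed
  have flat: "ym_form (curv G x) (curv G x) (pp_inv_metric f x) = 0"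
    unfolding curv_gen_ppwave[OF G x] by (rule ym_form_pp_curv)
  show ?thesis
    unfolding ym_density_pp_metric curv ym_form_quadratic_expand flat
    by (simp add: var_coeff1_def var_coeff2_def var_coeff3_def var_coeff4_def)
qed

lemma var_coeff1_eq_divergence: "var_coeff1 x = (\<Sum>a\<in>UNIV. pd (ym_current f k H a) a x)"
proof (cases "x \<in> U")
  case True
  then show ?thesis
    unfolding var_coeff1_def by (rule first_variation_eq_divergence[OF G _ par H])
next
  case False
  then have "x \<notin> K" using K(2) by auto
  then show ?thesis using var_coeff_outside pd_ym_current_outside by simp
qed

lemma EL_conn_variation:
  "((\<lambda>\<epsilon>. ym_action K (pp_metric f) (\<lambda>x l m n. G x l m n + \<epsilon> * H x l m n)) has_real_derivative 0) (at 0)"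
proof -
  obtain a :: pt where Ka: "K \<subseteq> cbox (-a) a"
    using bounded_subset_cbox_symmetric[OF compact_imp_bounded[OF K(1)]] by blast
  define B where "B = cbox (-a - (\<chi> i. 1)) (a + (\<chi> i. 1))"
  have KB: "K \<subseteq> B"
  proof
    fix y assume "y \<in> K"
    then have y: "(-a) $ i \<le> y $ i \<and> y $ i \<le> a $ i" for i using Ka by (auto simp: mem_box_cart)
    have "(- a - (\<chi> i. 1)) $ i \<le> y $ i \<and> y $ i \<le> (a + (\<chi> i. 1)) $ i" for i
      using y[of i] by simp
    then show "y \<in> B" unfolding B_def mem_box_cart by blast
  qed
  have int: "(P has_integral integral B P) B" if "continuous_on UNIV P" for P :: "pt \<Rightarrow> real"
    unfolding B_def by (intro integrable_integral integrable_continuous continuous_on_subset[OF that]) simp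
  define I where "I = (\<lambda>P :: pt \<Rightarrow> real. integral B P)"
  have action: "ym_action K (pp_metric f) (\<lambda>x l m n. G x l m n + \<epsilon> * H x l m n)
      = \<epsilon> * I var_coeff1 + \<epsilon>\<^sup>2 * I var_coeff2 + \<epsilon>^3 * I var_coeff3 + \<epsilon>^4 * I var_coeff4" for \<epsilon>
  proof -
    let ?P = "\<lambda>x. \<epsilon> * var_coeff1 x + \<epsilon>\<^sup>2 * var_coeff2 x + \<epsilon>^3 * var_coeff3 x + \<epsilon>^4 * var_coeff4 x"
    have "ym_action K (pp_metric f) (\<lambda>x l m n. G x l m n + \<epsilon> * H x l m n) = integral K ?P"
      unfolding ym_action_def by (rule integral_cong) (use K(2) ym_density_perturbed in auto)
    also have "\<dots> = integral UNIV ?P"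
      by (rule integral_eq_integral_UNIV[of K]) (auto simp: var_coeff_outside)
    also have "\<dots> = integral B ?P"
      by (rule integral_eq_integral_UNIV[of K, symmetric]) (use KB in \<open>auto simp: var_coeff_outside\<close>)
    also have "\<dots> = \<epsilon> * I var_coeff1 + \<epsilon>\<^sup>2 * I var_coeff2 + \<epsilon>^3 * I var_coeff3 + \<epsilon>^4 * I var_coeff4"
      unfolding I_def
      by (intro integral_unique has_integral_add has_integral_mult_right int continuous_on_var_coeff)
    finally show ?thesis .
  qed
  have "I var_coeff1 = 0"
    unfolding I_def B_def var_coeff1_eq_divergence by (rule integral_divergence_ym_current[OF Ka])
  moreover have "((\<lambda>\<epsilon>. \<epsilon> * I var_coeff1 + \<epsilon>\<^sup>2 * I var_coeff2 + \<epsilon>^3 * I var_coeff3 + \<epsilon>^4 * I var_coeff4)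
      has_real_derivative I var_coeff1) (at 0)"
    by (auto intro!: derivative_eq_intros)
  ultimately show ?thesis unfolding action by simp
qed

end

lemma EL_conn_gen_ppwave:
  assumes "gen_ppwave_axial U f k G" "parallel_lc_ricci U (pp_metric f)"
  shows "EL_conn U (pp_metric f) G"
  unfolding EL_conn_def using EL_conn_variation[OF assms] by blast

theorem theorem1:
  fixes U :: "(real^4) set" and f :: "real \<Rightarrow> real \<Rightarrow> real \<Rightarrow> real"
    and k :: "real \<Rightarrow> real" and G :: "real^4 \<Rightarrow> 4 \<Rightarrow> 4 \<Rightarrow> 4 \<Rightarrow> real"
  assumes "connected U"
    and "gen_ppwave_axial U f k G"
    and "parallel_lc_ricci U (pp_metric f)"
  shows "EL_metric U (pp_metric f) G \<and> EL_conn U (pp_metric f) G"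
  using EL_metric_gen_ppwave[OF assms(2)] EL_conn_gen_ppwave[OF assms(2,3)] by blast

end
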